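(* Let $W$ be a nonempty closed subset of $\mathbb{R}$, $n$ a positive integer, $\alpha_1,\dots,\alpha_n\in\mathrm{Aut}(W)$, and $G=\langle\alpha_1,\dots,\alpha_n\rangle$. Suppose $G$ contains no nonabelian free subsemigroup. If $\mathrm{Fix}_W(\alpha_i)\ne\emptyset$ for all $i$, then $\mathrm{Fix}_W(G)\ne\emptyset$.
   Context: $\mathrm{Aut}(W)$ is the group of order preserving bijections of $W$ (with the order induced from $\mathbb{R}$). For a subset $S$ of a group acting on $W$, $\mathrm{Fix}_W(S)$ is the set of points of $W$ fixed by every element of $S$. *)

theory Defs
  imports "HOL-Analysis.Analysis"
begin

text \<open>Aut(W): order preserving bijections of W \<subseteq> \<real>. To make composition
  well-behaved we represent an element by a function on \<real> which is the
  identity outside W.\<close>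
definition Aut :: "real set \<Rightarrow> (real \<Rightarrow> real) set" where
  "Aut W = {f. bij_betw f W W \<and> mono_on W f \<and> (\<forall>x. x \<notin> W \<longrightarrow> f x = x)}"

definition aut_inv :: "real set \<Rightarrow> (real \<Rightarrow> real) \<Rightarrow> (real \<Rightarrow> real)" where
  "aut_inv W f = (\<lambda>x. if x \<in> W then inv_into W f x else x)"

inductive_set gen_group :: "real set \<Rightarrow> (real \<Rightarrow> real) set \<Rightarrow> (real \<Rightarrow> real) set"
  for W S where
  gen_id: "id \<in> gen_group W S"
| gen_gen: "f \<in> S \<Longrightarrow> f \<in> gen_group W S"
| gen_inv: "f \<in> S \<Longrightarrow> aut_inv W f \<in> gen_group W S"
| gen_comp: "f \<in> gen_group W S \<Longrightarrow> g \<in> gen_group W S \<Longrightarrow> f \<circ> g \<in> gen_group W S"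

fun word_eval :: "(real \<Rightarrow> real) \<Rightarrow> (real \<Rightarrow> real) \<Rightarrow> bool list \<Rightarrow> (real \<Rightarrow> real)" where
  "word_eval f g [] = id"
| "word_eval f g (b # w) = (if b then f else g) \<circ> word_eval f g w"

definition free_semigroup_pair :: "(real \<Rightarrow> real) \<Rightarrow> (real \<Rightarrow> real) \<Rightarrow> bool" where
  "free_semigroup_pair f g \<longleftrightarrow>
     (\<forall>u v. u \<noteq> [] \<longrightarrow> v \<noteq> [] \<longrightarrow> u \<noteq> v \<longrightarrow> word_eval f g u \<noteq> word_eval f g v)"

definition has_nonab_free_subsemigroup :: "(real \<Rightarrow> real) set \<Rightarrow> bool" where
  "has_nonab_free_subsemigroup G \<longleftrightarrow> (\<exists>f\<in>G. \<exists>g\<in>G. free_semigroup_pair f g)"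

definition Fix :: "real set \<Rightarrow> (real \<Rightarrow> real) set \<Rightarrow> real set" where
  "Fix W S = {x \<in> W. \<forall>f\<in>S. f x = x}"

end

theory Submission
  imports Defs
begin

text \<open>Pick a fixed point of every generator, let \<open>x\<close> be the largest of them, and let
  \<open>l\<^sub>i\<close> be the largest fixed point of \<open>\<alpha>\<^sub>i\<close> below \<open>x\<close>; it exists because automorphisms
  of a closed \<open>W\<close> commute with suprema. Let \<open>l\<^sub>k\<close> be the smallest \<open>l\<^sub>i\<close>. If some \<open>\<alpha>\<^sub>i\<close>
  moved \<open>u = l\<^sub>k\<close>, then \<open>\<alpha>\<^sub>k\<close> fixes \<open>u\<close> and has no fixed point in \<open>(u, l\<^sub>i]\<close>, while the
  least fixed point \<open>v > u\<close> of \<open>\<alpha>\<^sub>i\<close> lies in that interval. As there are no fixed points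
  in between, \<open>\<alpha>\<^sub>k\<close> or its inverse pushes \<open>W \<inter> [u, v]\<close> towards \<open>u\<close>, and \<open>\<alpha>\<^sub>i\<close> or its
  inverse pushes it towards \<open>v\<close>; a power of the first map and the second one play ping-pong
  on small neighbourhoods of \<open>u\<close> and \<open>v\<close> and generate a free semigroup. Hence \<open>l\<^sub>k\<close> is
  fixed by every generator, and thus by the whole group.\<close>

lemma Aut_mem: "f \<in> Aut W \<Longrightarrow> x \<in> W \<Longrightarrow> f x \<in> W"
  unfolding Aut_def by (blast dest: bij_betw_apply)

lemma Aut_mono_on: "f \<in> Aut W \<Longrightarrow> mono_on W f"
  by (simp add: Aut_def)

lemma Aut_image_subset: "f \<in> Aut W \<Longrightarrow> f ` W \<subseteq> W"
  using Aut_mem by blast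

lemma Aut_surj: "f \<in> Aut W \<Longrightarrow> y \<in> W \<Longrightarrow> \<exists>x\<in>W. f x = y"
  unfolding Aut_def bij_betw_def by (metis (mono_tags) imageE mem_Collect_eq)

lemma Aut_less_iff:
  assumes "f \<in> Aut W" "x \<in> W" "y \<in> W"
  shows "f x < f y \<longleftrightarrow> x < y"
proof -
  have "mono_on W f" "inj_on f W" using assms(1) by (auto simp: Aut_def bij_betw_def)
  show ?thesis
  proof
    assume "f x < f y"
    then show "x < y"
      using \<open>mono_on W f\<close> assms(2,3) by (metis mono_onD not_less leD)
  next
    assume "x < y"
    then show "f x < f y"
      using \<open>mono_on W f\<close> \<open>inj_on f W\<close> assms(2,3)
      by (metis mono_onD inj_onD order_less_le)
  qed
qed

lemma Aut_le_iff: "f \<in> Aut W \<Longrightarrow> x \<in> W \<Longrightarrow> y \<in> W \<Longrightarrow> f x \<le> f y \<longleftrightarrow> x \<le> y"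
  using Aut_less_iff by (metis not_less)

lemma Aut_inj:
  assumes "f \<in> Aut W"
  shows "inj f"
proof (rule injI)
  fix x y assume eq: "f x = f y"
  have inj: "inj_on f W" and outside: "\<And>z. z \<notin> W \<Longrightarrow> f z = z"
    using assms by (auto simp: Aut_def bij_betw_def)
  have mem_iff: "f z \<in> W \<longleftrightarrow> z \<in> W" for z
    using Aut_mem[OF assms] outside by metis
  show "x = y"
  proof (cases "x \<in> W")
    case True
    then have "y \<in> W" using eq mem_iff by metis
    then show ?thesis using True eq inj by (simp add: inj_on_eq_iff)
  next
    case False
    then have "y \<notin> W" using eq mem_iff by metis
    then show ?thesis using False eq outside by metis
  qed
qed

lemma Aut_id: "id \<in> Aut W"
  by (simp add: Aut_def mono_onI)

lemma Aut_comp: "f \<in> Aut W \<Longrightarrow> g \<in> Aut W \<Longrightarrow> f \<circ> g \<in> Aut W"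
  unfolding Aut_def by (auto intro!: bij_betw_trans mono_onI simp: mono_onD bij_betw_apply)

lemma
  assumes "f \<in> Aut W" "y \<in> W"
  shows aut_inv_mem: "aut_inv W f y \<in> W"
    and Aut_aut_inv_apply: "f (aut_inv W f y) = y"
    and aut_inv_Aut_apply: "aut_inv W f (f y) = y"
  using assms by (auto simp: Aut_def aut_inv_def bij_betw_def f_inv_into_f inv_into_into)

lemma aut_inv_Aut:
  assumes "f \<in> Aut W"
  shows "aut_inv W f \<in> Aut W"
proof -
  have "bij_betw (inv_into W f) W W"
    using assms by (simp add: Aut_def bij_betw_inv_into)
  then have "bij_betw (aut_inv W f) W W"
    by (rule bij_betw_cong[THEN iffD1, rotated]) (simp add: aut_inv_def)
  moreover have "mono_on W (aut_inv W f)"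
    by (rule mono_onI) (metis assms Aut_le_iff Aut_aut_inv_apply aut_inv_mem)
  ultimately show ?thesis by (simp add: Aut_def aut_inv_def)
qed

lemma aut_inv_less_iff:
  assumes "f \<in> Aut W" "t \<in> W"
  shows "aut_inv W f t < t \<longleftrightarrow> t < f t" and "t < aut_inv W f t \<longleftrightarrow> f t < t"
  using Aut_less_iff[OF assms(1) aut_inv_mem[OF assms]]
    Aut_less_iff[OF assms(1) assms(2) aut_inv_mem[OF assms]] Aut_aut_inv_apply[OF assms] assms(2)
  by auto

lemma Aut_Sup_image:
  assumes "closed W" "f \<in> Aut W" "S \<subseteq> W" "S \<noteq> {}" "bdd_above S"
  shows "f (Sup S) = Sup (f ` S)"
proof (rule antisym)
  have Sup_W: "Sup S \<in> W" using closed_subset_contains_Sup assms(1,3-5) .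
  have upper: "f s \<le> f (Sup S)" if "s \<in> S" for s
    using that assms Sup_W by (auto simp: Aut_le_iff cSup_upper)
  then show "Sup (f ` S) \<le> f (Sup S)"
    using assms(4) by (auto intro: cSup_least)
  have "bdd_above (f ` S)" using upper by (rule bdd_aboveI2)
  then have "Sup (f ` S) \<in> W"
    using assms Aut_mem by (intro closed_subset_contains_Sup) auto
  then obtain z where z: "z \<in> W" "f z = Sup (f ` S)" using Aut_surj assms(2) by blast
  have "s \<le> z" if "s \<in> S" for s
    using that z assms \<open>bdd_above (f ` S)\<close> by (metis Aut_le_iff cSup_upper imageI subsetD)
  then have "Sup S \<le> z" using assms(4) by (auto intro: cSup_least)
  then show "f (Sup S) \<le> Sup (f ` S)" using z Sup_W assms(2) by (metis Aut_le_iff)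
qed

lemma Aut_Inf_image:
  assumes "closed W" "f \<in> Aut W" "S \<subseteq> W" "S \<noteq> {}" "bdd_below S"
  shows "f (Inf S) = Inf (f ` S)"
proof (rule antisym)
  have Inf_W: "Inf S \<in> W" using closed_subset_contains_Inf assms(1,3-5) .
  have lower: "f (Inf S) \<le> f s" if "s \<in> S" for s
    using that assms Inf_W by (auto simp: Aut_le_iff cInf_lower)
  then show "f (Inf S) \<le> Inf (f ` S)"
    using assms(4) by (auto intro: cInf_greatest)
  have "bdd_below (f ` S)" using lower by (rule bdd_belowI2)
  then have "Inf (f ` S) \<in> W"
    using assms Aut_mem by (intro closed_subset_contains_Inf) auto
  then obtain z where z: "z \<in> W" "f z = Inf (f ` S)" using Aut_surj assms(2) by blast
  have "z \<le> s" if "s \<in> S" for s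
    using that z assms \<open>bdd_below (f ` S)\<close> by (metis Aut_le_iff cInf_lower imageI subsetD)
  then have "z \<le> Inf S" using assms(4) by (auto intro: cInf_greatest)
  then show "Inf (f ` S) \<le> f (Inf S)" using z Inf_W assms(2) by (metis Aut_le_iff)
qed

lemma mono_on_fixpoint_between:
  fixes f :: "real \<Rightarrow> real"
  assumes "closed W" "mono_on W f" "f ` W \<subseteq> W"
    and "s \<in> W" "t \<in> W" "s \<le> t" "s \<le> f s" "f t \<le> t"
  shows "\<exists>y\<in>W. s \<le> y \<and> y \<le> t \<and> f y = y"
proof -
  define S where "S = {y \<in> W. s \<le> y \<and> y \<le> t \<and> y \<le> f y}"
  have "s \<in> S" "S \<subseteq> W" using assms by (auto simp: S_def)
  have bdd: "bdd_above S" by (rule bdd_aboveI[of _ t]) (auto simp: S_def)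
  define m where "m = Sup S"
  have m_W: "m \<in> W"
    unfolding m_def using closed_subset_contains_Sup assms(1) \<open>S \<subseteq> W\<close> \<open>s \<in> S\<close> bdd by blast
  have "s \<le> m" unfolding m_def using cSup_upper[OF \<open>s \<in> S\<close> bdd] .
  have "m \<le> t" unfolding m_def using \<open>s \<in> S\<close> by (auto simp: S_def intro: cSup_least)
  have "y \<le> f m" if "y \<in> S" for y
  proof -
    have "y \<le> m" unfolding m_def using cSup_upper[OF that bdd] .
    then have "f y \<le> f m" using that m_W assms(2) by (auto simp: S_def mono_onD)
    then show ?thesis using that by (auto simp: S_def)
  qed
  then have "m \<le> f m" unfolding m_def using \<open>s \<in> S\<close> by (auto intro: cSup_least)
  moreover have "f m \<in> S"
  proof -
    have "f m \<in> W" using m_W assms(3) by auto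
    moreover have "f m \<le> t" using mono_onD[OF assms(2) m_W assms(5) \<open>m \<le> t\<close>] assms(8) by simp
    moreover have "f m \<le> f (f m)" using mono_onD[OF assms(2) m_W \<open>f m \<in> W\<close> \<open>m \<le> f m\<close>] .
    ultimately show ?thesis using \<open>s \<le> m\<close> \<open>m \<le> f m\<close> by (simp add: S_def)
  qed
  then have "f m \<le> m" unfolding m_def using cSup_upper[OF _ bdd] by simp
  ultimately show ?thesis using m_W \<open>s \<le> m\<close> \<open>m \<le> t\<close> by (intro bexI[of _ m]) auto
qed

lemma Aut_fixpoint_free_sign:
  assumes "closed W" "f \<in> Aut W" "s \<in> W" "t \<in> W" "s \<le> t"
    and no_fix: "\<forall>y\<in>W \<inter> {s..t}. f y \<noteq> y"
  shows "f s < s \<longleftrightarrow> f t < t"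
proof
  assume "f s < s"
  show "f t < t"
  proof (rule ccontr)
    assume "\<not> f t < t"
    then have "aut_inv W f t \<le> t"
      using aut_inv_less_iff(2)[OF assms(2,4)] by (metis not_le)
    moreover have "s \<le> aut_inv W f s"
      using \<open>f s < s\<close> aut_inv_less_iff(2)[OF assms(2,3)] by simp
    ultimately obtain y where "y \<in> W" "s \<le> y" "y \<le> t" "aut_inv W f y = y"
      using mono_on_fixpoint_between[OF assms(1) Aut_mono_on Aut_image_subset]
        aut_inv_Aut[OF assms(2)] assms(3-5)
      by metis
    then show False using no_fix Aut_aut_inv_apply[OF assms(2)] by force
  qed
next
  assume "f t < t"
  show "f s < s"
  proof (rule ccontr)
    assume "\<not> f s < s"
    then obtain y where "y \<in> W" "s \<le> y" "y \<le> t" "f y = y"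
      using mono_on_fixpoint_between[OF assms(1) Aut_mono_on[OF assms(2)] Aut_image_subset[OF assms(2)]]
        assms(3-5) \<open>f t < t\<close> by (meson not_less less_imp_le)
    then show False using no_fix by auto
  qed
qed

lemma Aut_greatest_fixpoint_below:
  assumes "closed W" "f \<in> Aut W" "p \<in> W" "f p = p" "p \<le> x"
  shows "\<exists>l\<in>W. f l = l \<and> l \<le> x \<and> (\<forall>t\<in>W \<inter> {l<..x}. f t \<noteq> t)"
proof -
  define S where "S = {y \<in> W. f y = y \<and> y \<le> x}"
  have S: "p \<in> S" "S \<subseteq> W" "f ` S = S" using assms(3-5) by (auto simp: S_def image_iff)
  have bdd: "bdd_above S" by (rule bdd_aboveI[of _ x]) (auto simp: S_def)
  have "Sup S \<in> W" using closed_subset_contains_Sup[OF assms(1) S(2) _ bdd] S(1) by blast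
  moreover have "f (Sup S) = Sup S" using Aut_Sup_image[OF assms(1,2) S(2) _ bdd] S by auto
  moreover have "Sup S \<le> x" using S(1) by (auto simp: S_def intro: cSup_least)
  moreover have "f t \<noteq> t" if "t \<in> W \<inter> {Sup S<..x}" for t
    using that cSup_upper[OF _ bdd, of t] by (auto simp: S_def)
  ultimately show ?thesis by blast
qed

lemma Aut_least_fixpoint_above:
  assumes "closed W" "f \<in> Aut W" "q \<in> W" "f q = q" "u \<le> q"
  shows "\<exists>d\<in>W. f d = d \<and> u \<le> d \<and> d \<le> q \<and> (\<forall>t\<in>W \<inter> {u..<d}. f t \<noteq> t)"
proof -
  define S where "S = {y \<in> W. f y = y \<and> u \<le> y}"
  have S: "q \<in> S" "S \<subseteq> W" "f ` S = S" using assms(3-5) by (auto simp: S_def image_iff)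
  have bdd: "bdd_below S" by (rule bdd_belowI[of _ u]) (auto simp: S_def)
  have "Inf S \<in> W" using closed_subset_contains_Inf[OF assms(1) S(2) _ bdd] S(1) by blast
  moreover have "f (Inf S) = Inf S" using Aut_Inf_image[OF assms(1,2) S(2) _ bdd] S by auto
  moreover have "u \<le> Inf S" using S(1) by (auto simp: S_def intro: cInf_greatest)
  moreover have "Inf S \<le> q" using cInf_lower[OF S(1) bdd] .
  moreover have "f t \<noteq> t" if "t \<in> W \<inter> {u..<Inf S}" for t
    using that cInf_lower[OF _ bdd, of t] by (auto simp: S_def)
  ultimately show ?thesis by blast
qed

lemma Aut_funpow: "f \<in> Aut W \<Longrightarrow> f ^^ k \<in> Aut W"
  by (induction k) (auto simp: Aut_id Aut_comp)

lemma Aut_orbit_bounded_below_fixpoint: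
  assumes "closed W" "h \<in> Aut W" "v \<in> W" "h v \<le> v" "\<And>k. c \<le> (h ^^ k) v"
  shows "\<exists>m\<in>W. c \<le> m \<and> m \<le> v \<and> h m = m"
proof -
  have orbit_W: "(h ^^ k) v \<in> W" for k
    using Aut_mem[OF Aut_funpow[OF assms(2)] assms(3)] .
  have decreasing: "(h ^^ Suc k) v \<le> (h ^^ k) v" for k
  proof (induction k)
    case (Suc k)
    then show ?case using orbit_W assms(2) by (simp add: Aut_le_iff Aut_mem)
  qed (use assms(4) in simp)
  define T where "T = range (\<lambda>k. (h ^^ k) v)"
  have T: "T \<subseteq> W" "T \<noteq> {}" "v \<in> T" using orbit_W by (auto simp: T_def intro: range_eqI[of _ _ 0])
  have bdd: "bdd_below T" unfolding T_def using assms(5) by (rule bdd_belowI2)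
  have hT: "h ` T \<subseteq> T"
  proof (rule image_subsetI)
    fix t assume "t \<in> T"
    then obtain k where "t = (h ^^ k) v" by (auto simp: T_def)
    then have "h t = (h ^^ Suc k) v" by simp
    then show "h t \<in> T" unfolding T_def by (rule range_eqI)
  qed
  have "Inf (h ` T) = Inf T"
  proof (rule antisym)
    show "Inf (h ` T) \<le> Inf T"
    proof (rule cInf_greatest[OF T(2)])
      fix t assume "t \<in> T"
      then obtain k where t: "t = (h ^^ k) v" by (auto simp: T_def)
      have "Inf (h ` T) \<le> h t"
        using \<open>t \<in> T\<close> bdd_below_mono[OF bdd hT] by (auto intro: cInf_lower)
      also have "h t \<le> t" using decreasing t by simp
      finally show "Inf (h ` T) \<le> t" .
    qed
    show "Inf T \<le> Inf (h ` T)"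
      using hT T(2) bdd by (intro cInf_superset_mono) auto
  qed
  moreover have "h (Inf T) = Inf (h ` T)" using Aut_Inf_image[OF assms(1,2) T(1,2) bdd] .
  moreover have "Inf T \<in> W" using closed_subset_contains_Inf[OF assms(1) T(1,2) bdd] .
  moreover have "c \<le> Inf T" using T(2) assms(5) by (auto simp: T_def intro: cInf_greatest)
  moreover have "Inf T \<le> v" using cInf_lower[OF T(3) bdd] .
  ultimately show ?thesis by auto
qed

lemma word_eval_Cons_pingpong:
  assumes "F ` (A \<union> B) \<subseteq> A" "G ` (A \<union> B) \<subseteq> B" "x \<in> A \<union> B"
  shows "word_eval F G (b # w) x \<in> (if b then A else B)"
proof -
  have "word_eval F G w x \<in> A \<union> B" by (induction w) (use assms in auto)
  then show ?thesis using assms(1,2) by auto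
qed

lemma word_eval_Cons_pingpong_neq_id:
  assumes "F ` (A \<union> B) \<subseteq> A" "G ` (A \<union> B) \<subseteq> B" "A \<inter> B = {}" "A \<noteq> {}" "B \<noteq> {}"
  shows "word_eval F G (b # w) \<noteq> id"
proof
  assume id: "word_eval F G (b # w) = id"
  obtain x where x: "x \<in> (if b then B else A)" using assms(4,5) by (cases b) auto
  have "x = word_eval F G (b # w) x" using id by simp
  also have "\<dots> \<in> (if b then A else B)"
    using x by (intro word_eval_Cons_pingpong[OF assms(1,2)]) (auto split: if_splits)
  finally show False using x assms(3) by (cases b) auto
qed

lemma pingpong_free_semigroup_pair:
  assumes "inj F" "inj G" "F ` (A \<union> B) \<subseteq> A" "G ` (A \<union> B) \<subseteq> B"
    and "A \<inter> B = {}" "A \<noteq> {}" "B \<noteq> {}"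
  shows "free_semigroup_pair F G"
proof -
  note neq_id = word_eval_Cons_pingpong_neq_id[OF assms(3-7)]
  have "u = v" if "word_eval F G u = word_eval F G v" for u v
    using that
  proof (induction u arbitrary: v)
    case Nil
    then show ?case using neq_id by (metis word_eval.simps(1) list.exhaust)
  next
    case (Cons b u)
    then obtain c v' where v: "v = c # v'" using neq_id by (metis word_eval.simps(1) list.exhaust)
    obtain x where "x \<in> A" using assms(6) by blast
    have "word_eval F G (b # u) x \<in> (if b then A else B)"
      using \<open>x \<in> A\<close> by (intro word_eval_Cons_pingpong[OF assms(3,4)]) auto
    moreover have "word_eval F G v x \<in> (if c then A else B)"
      unfolding v using \<open>x \<in> A\<close> by (intro word_eval_Cons_pingpong[OF assms(3,4)]) auto
    moreover have "word_eval F G (b # u) x = word_eval F G v x" using Cons.prems by (rule fun_cong)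
    ultimately have "b = c" using assms(5) by (cases b; cases c) auto
    have "(if b then F else G) (word_eval F G u y) = (if b then F else G) (word_eval F G v' y)" for y
      using fun_cong[OF Cons.prems, of y] v \<open>b = c\<close> by simp
    then have "word_eval F G u = word_eval F G v'"
      using assms(1,2) by (cases b) (auto simp: fun_eq_iff inj_eq)
    then show ?case using Cons.IH v \<open>b = c\<close> by simp
  qed
  then show ?thesis by (auto simp: free_semigroup_pair_def)
qed

lemma gen_group_Aut:
  assumes "S \<subseteq> Aut W" "f \<in> gen_group W S"
  shows "f \<in> Aut W"
  using assms(2) by induction (use assms(1) in \<open>blast intro: Aut_id aut_inv_Aut Aut_comp\<close>)+

lemma gen_group_fixes:
  assumes "S \<subseteq> Aut W" "x \<in> W" "\<forall>f\<in>S. f x = x" "f \<in> gen_group W S"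
  shows "f x = x"
  using assms(4)
proof (induction rule: gen_group.induct)
  case (gen_inv f)
  then show ?case using assms(1-3) aut_inv_Aut_apply by (metis subsetD)
qed (use assms in auto)

lemma gen_group_funpow: "f \<in> gen_group W S \<Longrightarrow> f ^^ k \<in> gen_group W S"
  by (induction k) (auto intro: gen_group.intros)

lemma gen_group_drift_down:
  assumes "closed W" "S \<subseteq> Aut W" "f \<in> S" "u \<in> W" "v \<in> W" "f u = u"
    and no_fix: "\<forall>t\<in>W \<inter> {u<..v}. f t \<noteq> t"
  obtains h where "h \<in> gen_group W S" "h u = u" "\<forall>t\<in>W \<inter> {u<..v}. h t < t"
proof -
  have f: "f \<in> Aut W" using assms(2,3) by auto
  have same_sign: "f t < t \<longleftrightarrow> f v < v" if "t \<in> W \<inter> {u<..v}" for t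
    using that no_fix assms(5) by (intro Aut_fixpoint_free_sign[OF assms(1) f]) auto
  show ?thesis
  proof (cases "f v < v")
    case True
    then show ?thesis using that[of f] assms(3,6) same_sign by (auto intro: gen_gen)
  next
    case False
    then have "t < f t" if "t \<in> W \<inter> {u<..v}" for t
      using that same_sign no_fix by (meson linorder_neqE_linordered_idom)
    then show ?thesis
      using that[of "aut_inv W f"] aut_inv_less_iff(1)[OF f]
        aut_inv_Aut_apply[OF f assms(4)] assms(3,6)
      by (auto intro: gen_inv)
  qed
qed

lemma gen_group_drift_up:
  assumes "closed W" "S \<subseteq> Aut W" "f \<in> S" "u \<in> W" "v \<in> W" "f v = v"
    and no_fix: "\<forall>t\<in>W \<inter> {u..<v}. f t \<noteq> t"
  obtains g where "g \<in> gen_group W S" "g v = v" "\<forall>t\<in>W \<inter> {u..<v}. t < g t"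
proof -
  have f: "f \<in> Aut W" using assms(2,3) by auto
  have same_sign: "f u < u \<longleftrightarrow> f t < t" if "t \<in> W \<inter> {u..<v}" for t
    using that no_fix assms(4) by (intro Aut_fixpoint_free_sign[OF assms(1) f]) auto
  show ?thesis
  proof (cases "f u < u")
    case True
    then show ?thesis
      using that[of "aut_inv W f"] same_sign aut_inv_less_iff(2)[OF f]
        aut_inv_Aut_apply[OF f assms(5)] assms(3,6)
      by (auto intro: gen_inv)
  next
    case False
    then have "t < f t" if "t \<in> W \<inter> {u..<v}" for t
      using that same_sign no_fix by (meson linorder_neqE_linordered_idom)
    then show ?thesis using that[of f] assms(3,6) by (auto intro: gen_gen)
  qed
qed

lemma gen_group_free_of_opposite_drifts:
  assumes "closed W" "S \<subseteq> Aut W" "h \<in> gen_group W S" "g \<in> gen_group W S"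
    and "u \<in> W" "v \<in> W" "u < v"
    and h_down: "h u = u" "\<forall>t\<in>W \<inter> {u<..v}. h t < t"
    and g_up: "g v = v" "\<forall>t\<in>W \<inter> {u..<v}. t < g t"
  shows "has_nonab_free_subsemigroup (gen_group W S)"
proof -
  have h: "h \<in> Aut W" and g: "g \<in> Aut W" using assms(2-4) gen_group_Aut by auto
  have "u < g u" using g_up assms(5,7) by auto
  have "\<exists>N. (h ^^ N) v < g u"
    \<comment> \<open>else the infimum of the decreasing orbit of \<open>v\<close> is a fixed point of \<open>h\<close> in \<open>(u, v]\<close>\<close>
  proof (rule ccontr)
    assume "\<nexists>N. (h ^^ N) v < g u"
    then have "g u \<le> (h ^^ k) v" for k by (simp add: not_less)
    moreover have "h v \<le> v" using h_down assms(6,7) by (auto intro: less_imp_le)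
    ultimately obtain m where "m \<in> W" "g u \<le> m" "m \<le> v" "h m = m"
      using Aut_orbit_bounded_below_fixpoint[OF assms(1) h assms(6)] by blast
    then show False using h_down \<open>u < g u\<close> by force
  qed
  then obtain N where N: "(h ^^ N) v < g u" ..
  define F where "F = h ^^ N"
  define A where "A = W \<inter> {u..F v}"
  define B where "B = W \<inter> {g u..v}"
  have "(h ^^ k) u = u" for k by (induction k) (simp_all add: h_down(1))
  then have F: "F \<in> Aut W" "F u = u" unfolding F_def using Aut_funpow[OF h] by auto
  have "g u \<in> W" "g u < v" using Aut_mem[OF g] Aut_less_iff[OF g] assms(5-7) g_up(1) by metis+
  have "u \<le> F v" using Aut_le_iff[OF F(1) assms(5,6)] F(2) assms(7) by simp
  have uv: "A \<union> B \<subseteq> W \<inter> {u..v}"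
    using N \<open>g u < v\<close> \<open>u < g u\<close> by (auto simp: A_def B_def F_def)
  have "F ` (A \<union> B) \<subseteq> A"
  proof (rule image_subsetI)
    fix t assume "t \<in> A \<union> B"
    then have "t \<in> W" "u \<le> t" "t \<le> v" using uv by auto
    then have "F u \<le> F t" "F t \<le> F v" "F t \<in> W"
      using Aut_le_iff[OF F(1)] Aut_mem[OF F(1)] assms(5,6) by auto
    then show "F t \<in> A" using F(2) by (simp add: A_def)
  qed
  moreover have "g ` (A \<union> B) \<subseteq> B"
  proof (rule image_subsetI)
    fix t assume "t \<in> A \<union> B"
    then have "t \<in> W" "u \<le> t" "t \<le> v" using uv by auto
    then have "g u \<le> g t" "g t \<le> g v" "g t \<in> W"
      using Aut_le_iff[OF g] Aut_mem[OF g] assms(5,6) by auto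
    then show "g t \<in> B" using g_up(1) by (simp add: B_def)
  qed
  moreover have "A \<inter> B = {}" using N by (auto simp: A_def B_def F_def)
  moreover have "u \<in> A" using assms(5) \<open>u \<le> F v\<close> by (simp add: A_def)
  moreover have "v \<in> B" using assms(6) \<open>g u < v\<close> by (simp add: B_def)
  ultimately have "free_semigroup_pair F g"
    using pingpong_free_semigroup_pair[OF Aut_inj[OF F(1)] Aut_inj[OF g]] by blast
  then show ?thesis
    unfolding has_nonab_free_subsemigroup_def F_def using gen_group_funpow[OF assms(3)] assms(4) by blast
qed
lemma gen_group_free_of_crossing_fixpoints:
  assumes "closed W" "S \<subseteq> Aut W" "f \<in> S" "g \<in> S" "u \<in> W" "v \<in> W" "u < v"
    and f_fix: "f u = u" "\<forall>t\<in>W \<inter> {u<..v}. f t \<noteq> t"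
    and g_fix: "g v = v" "g u \<noteq> u"
  shows "has_nonab_free_subsemigroup (gen_group W S)"
proof -
  obtain d where d: "d \<in> W" "g d = d" "u \<le> d" "d \<le> v" "\<forall>t\<in>W \<inter> {u..<d}. g t \<noteq> t"
    using Aut_least_fixpoint_above[OF assms(1), of g v u] assms(2,4,6,7) g_fix(1) by force
  have "u < d" using d(2,3) g_fix(2) by (cases "u = d") auto
  have "\<forall>t\<in>W \<inter> {u<..d}. f t \<noteq> t" using f_fix(2) d(4) by auto
  then obtain h where h: "h \<in> gen_group W S" "h u = u" "\<forall>t\<in>W \<inter> {u<..d}. h t < t"
    using gen_group_drift_down[OF assms(1-3,5) d(1) f_fix(1)] by blast
  obtain g' where g': "g' \<in> gen_group W S" "g' d = d" "\<forall>t\<in>W \<inter> {u..<d}. t < g' t"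
    using gen_group_drift_up[OF assms(1,2,4,5) d(1,2,5)] by blast
  show ?thesis
    using gen_group_free_of_opposite_drifts[OF assms(1,2) h(1) g'(1) assms(5) d(1) \<open>u < d\<close>]
      h(2,3) g'(2,3) by blast
qed

lemma Aut_finite_common_fixpoint:
  assumes "closed W" "finite S" "S \<noteq> {}" "S \<subseteq> Aut W"
    and no_free: "\<not> has_nonab_free_subsemigroup (gen_group W S)"
    and "\<forall>f\<in>S. \<exists>y\<in>W. f y = y"
  shows "\<exists>y\<in>W. \<forall>f\<in>S. f y = y"
proof -
  obtain p where p: "\<And>f. f \<in> S \<Longrightarrow> p f \<in> W \<and> f (p f) = p f" using assms(6) by metis
  define x where "x = Max (p ` S)"
  have "\<forall>f\<in>S. \<exists>l. l \<in> W \<and> f l = l \<and> l \<le> x \<and> (\<forall>t\<in>W \<inter> {l<..x}. f t \<noteq> t)"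
  proof
    fix f assume f: "f \<in> S"
    have "p f \<le> x" unfolding x_def using f assms(2) by simp
    then show "\<exists>l. l \<in> W \<and> f l = l \<and> l \<le> x \<and> (\<forall>t\<in>W \<inter> {l<..x}. f t \<noteq> t)"
      using Aut_greatest_fixpoint_below[OF assms(1)] assms(4) f p[OF f] by blast
  qed
  then obtain l where l: "\<And>f. f \<in> S \<Longrightarrow> l f \<in> W \<and> f (l f) = l f \<and> l f \<le> x \<and>
      (\<forall>t\<in>W \<inter> {l f<..x}. f t \<noteq> t)" by metis
  have "Min (l ` S) \<in> l ` S" using assms(2,3) by (intro Min_in) auto
  then obtain k where "k \<in> S" "l k = Min (l ` S)" by (metis imageE)
  then have k: "k \<in> S" "\<And>f. f \<in> S \<Longrightarrow> l k \<le> l f" using assms(2) by simp_all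
  have "f (l k) = l k" if f: "f \<in> S" for f
  proof (rule ccontr)
    assume moved: "f (l k) \<noteq> l k"
    then have "l k < l f" using k(2)[OF f] l[OF f] by (cases "l k = l f") auto
    moreover have "\<forall>t\<in>W \<inter> {l k<..l f}. k t \<noteq> t" using l[OF k(1)] l[OF f] by auto
    ultimately have "has_nonab_free_subsemigroup (gen_group W S)"
      using gen_group_free_of_crossing_fixpoints[OF assms(1,4) k(1) f] l[OF k(1)] l[OF f] moved
      by blast
    then show False using no_free by contradiction
  qed
  then show ?thesis using l[OF k(1)] by blast
qed

theorem lemma4p4:
  fixes W :: "real set" and n :: nat and \<alpha> :: "nat \<Rightarrow> (real \<Rightarrow> real)"
  assumes "W \<noteq> {}" and "closed W" and "n > 0"
    and "\<And>i. i \<in> {1..n} \<Longrightarrow> \<alpha> i \<in> Aut W"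
    and "\<not> has_nonab_free_subsemigroup (gen_group W (\<alpha> ` {1..n}))"
    and "\<And>i. i \<in> {1..n} \<Longrightarrow> Fix W {\<alpha> i} \<noteq> {}"
  shows "Fix W (gen_group W (\<alpha> ` {1..n})) \<noteq> {}"
proof -
  let ?S = "\<alpha> ` {1..n}"
  have S: "?S \<subseteq> Aut W" using assms(4) by blast
  have "\<forall>f\<in>?S. \<exists>y\<in>W. f y = y" using assms(6) by (fastforce simp: Fix_def)
  then obtain y where "y \<in> W" "\<forall>f\<in>?S. f y = y"
    using Aut_finite_common_fixpoint[OF assms(2) _ _ S assms(5)] assms(3) by auto
  then have "y \<in> Fix W (gen_group W ?S)"
    using gen_group_fixes[OF S] unfolding Fix_def by blast
  then show ?thesis by blast
qed

end
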